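(* Let $s$ be a positive integer such that $(s-\bar k)>(\bar k+1)\big[(\sqrt{\rho_+(s)/\rho_-(s)}+1)\frac{2\rho_+(1)}{\rho_-(s)}\big]^2$, and run Algorithm FoBa-gdt with $\epsilon>\frac{2\sqrt2\rho_+(1)}{\rho_-(s)}\|\nabla Q(\bar\beta)\|_\infty$. Let $\beta^{(k)}$ be the output and $F^{(k)}$ its support. Let $\gamma=\frac{2\sqrt2\,\epsilon}{\rho_-(s)}$ and $\bar\Delta=|\{j\in\bar F-F^{(k)}:|\bar\beta_j|<\gamma\}|$. Then $$\|\beta^{(k)}-\bar\beta\|^2\le\frac{8\epsilon^2}{\rho_-(s)^2}\bar\Delta,\qquad Q(\beta^{(k)})-Q(\bar\beta)\le\frac{\epsilon^2}{\rho_-(s)}\bar\Delta,$$ $$\frac{\rho_-(s)^2}{8\rho_+(1)^2}|F^{(k)}-\bar F|\le|\bar F-F^{(k)}|\le2\bar\Delta.$$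
   Context: Let $Q:\mathbb{R}^d\to\mathbb{R}$ be convex and continuously differentiable. $e_j$ is the $j$-th standard basis vector, $\mathrm{supp}(\beta)=\{j:\beta_j\ne0\}$, $\|\beta\|_0=|\mathrm{supp}(\beta)|$, $\|\cdot\|$ is the Euclidean norm, $A-B$ is set difference, and $v_S$ is $v$ restricted to the coordinates in $S$. For $F\subseteq\{1,\dots,d\}$, $\hat\beta(F)$ denotes a minimizer of $Q$ over $\{\beta:\mathrm{supp}(\beta)\subseteq F\}$ (assumed to exist). For a positive integer $s$, the restricted strong convexity constants $\rho_-(s),\rho_+(s)>0$ are constants such that for all $\beta,\beta'\in\mathbb{R}^d$ with $\|\beta'-\beta\|_0\le s$: $\frac{\rho_-(s)}{2}\|\beta'-\beta\|^2\le Q(\beta')-Q(\beta)-\langle\nabla Q(\beta),\beta'-\beta\rangle\le\frac{\rho_+(s)}{2}\|\beta'-\beta\|^2.$ $\bar\beta$ is a solution of $\min_\beta Q(\beta)$ subject to $\|\beta\|_0\le\bar k$, $\bar F=\mathrm{supp}(\bar\beta)$ and $\bar k=|\bar F|$. Algorithm FoBa has two variants: FoBa-obj (parameter $\delta>0$) and FoBa-gdt (parameter $\epsilon>0$). Initialize $F^{(0)}=\emptyset$, $\beta^{(0)}=0$, $k=0$, and repeat the following iteration. (1) Stopping test: FoBa-obj stops if $Q(\beta^{(k)})-\min_{\alpha\in\mathbb{R},\,j\notin F^{(k)}}Q(\beta^{(k)}+\alpha e_j)<\delta$; FoBa-gdt stops if $\|\nabla Q(\beta^{(k)})\|_\infty<\epsilon$.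 On stopping the output is $\beta^{(k)}$ with support $F^{(k)}$, and the algorithm is said to terminate at $k$. (2) Forward step: FoBa-obj picks $i^{(k)}\in\arg\min_{i\notin F^{(k)}}\min_\alpha Q(\beta^{(k)}+\alpha e_i)$; FoBa-gdt picks $i^{(k)}\in\arg\max_{i\notin F^{(k)}}|\nabla Q(\beta^{(k)})_i|$. Set $F^{(k+1)}=F^{(k)}\cup\{i^{(k)}\}$, $\beta^{(k+1)}=\hat\beta(F^{(k+1)})$, $\delta^{(k+1)}=Q(\beta^{(k)})-Q(\beta^{(k+1)})$, $k\leftarrow k+1$. (3) Backward step: repeat — if $F^{(k)}=\emptyset$ or $\min_{i\in F^{(k)}}Q(\beta^{(k)}-\beta^{(k)}_ie_i)-Q(\beta^{(k)})\ge\delta^{(k)}/2$, leave the backward step; otherwise pick $j\in\arg\min_{i\in F^{(k)}}Q(\beta^{(k)}-\beta^{(k)}_ie_i)$, set $F^{(k-1)}=F^{(k)}-\{j\}$, $\beta^{(k-1)}=\hat\beta(F^{(k-1)})$, $k\leftarrow k-1$ (where $\delta^{(k-1)}$ is the value recorded at the most recent forward step producing index $k-1$). Thus $|F^{(k)}|=k$ always. "At the beginning of an iteration" means the state just before a stopping test. *)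

theory Defs
  imports "HOL-Analysis.Analysis"
begin

text \<open>Vectors in R^d are modelled as real^'n with a finite index type 'n (d = CARD('n)).
  The gradient of Q is a given function g with (Q has_derivative (\<lambda>h. g x \<bullet> h)) (at x).\<close>

definition supp :: "real^'n \<Rightarrow> 'n set" where
  "supp b = {j. b $ j \<noteq> 0}"

text \<open>Restricted strong convexity / smoothness with constants lo = rho_-(s), hi = rho_+(s).\<close>
definition rsc :: "(real^'n \<Rightarrow> real) \<Rightarrow> (real^'n \<Rightarrow> real^'n) \<Rightarrow> nat \<Rightarrow> real \<Rightarrow> real \<Rightarrow> bool" where
  "rsc Q g s lo hi \<longleftrightarrow> lo > 0 \<and> hi > 0 \<and>
     (\<forall>b b'. card (supp (b' - b)) \<le> s \<longrightarrow>
        lo / 2 * (norm (b' - b))\<^sup>2 \<le> Q b' - Q b - g b \<bullet> (b' - b) \<and>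
        Q b' - Q b - g b \<bullet> (b' - b) \<le> hi / 2 * (norm (b' - b))\<^sup>2)"

text \<open>b is a minimizer of Q over vectors supported in F (a possible value of hat-beta(F)).\<close>
definition restr_min :: "(real^'n \<Rightarrow> real) \<Rightarrow> 'n set \<Rightarrow> real^'n \<Rightarrow> bool" where
  "restr_min Q F b \<longleftrightarrow> supp b \<subseteq> F \<and> (\<forall>b'. supp b' \<subseteq> F \<longrightarrow> Q b \<le> Q b')"

text \<open>Algorithm state: (F^(k), beta^(k), ds) where ds ! (i-1) = delta^(i) for i = 1..k
  (the value recorded at the most recent forward step producing index i).\<close>
type_synonym 'n foba_state = "'n set \<times> (real^'n) \<times> real list"

definition gdt_stop :: "(real^'n \<Rightarrow> real^'n) \<Rightarrow> real \<Rightarrow> real^'n \<Rightarrow> bool" where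
  "gdt_stop g \<epsilon> b \<longleftrightarrow> infnorm (g b) < \<epsilon>"

definition gdt_fwd :: "(real^'n \<Rightarrow> real) \<Rightarrow> (real^'n \<Rightarrow> real^'n) \<Rightarrow> real
    \<Rightarrow> 'n foba_state \<Rightarrow> 'n foba_state \<Rightarrow> bool" where
  "gdt_fwd Q g \<epsilon> S S' \<longleftrightarrow> (\<exists>F b ds i b'. S = (F, b, ds) \<and> \<not> gdt_stop g \<epsilon> b \<and>
      i \<notin> F \<and> (\<forall>j. j \<notin> F \<longrightarrow> \<bar>g b $ j\<bar> \<le> \<bar>g b $ i\<bar>) \<and>
      restr_min Q (insert i F) b' \<and>
      S' = (insert i F, b', ds @ [Q b - Q b']))"

definition drop_val :: "(real^'n \<Rightarrow> real) \<Rightarrow> real^'n \<Rightarrow> 'n \<Rightarrow> real" where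
  "drop_val Q b i = Q (b - b $ i *\<^sub>R axis i 1)"

definition bwd_exit :: "(real^'n \<Rightarrow> real) \<Rightarrow> 'n foba_state \<Rightarrow> bool" where
  "bwd_exit Q S \<longleftrightarrow> (case S of (F, b, ds) \<Rightarrow>
      F = {} \<or> Min (drop_val Q b ` F) - Q b \<ge> last ds / 2)"

definition bwd_step :: "(real^'n \<Rightarrow> real) \<Rightarrow> 'n foba_state \<Rightarrow> 'n foba_state \<Rightarrow> bool" where
  "bwd_step Q S S' \<longleftrightarrow> (\<exists>F b ds j b'. S = (F, b, ds) \<and> \<not> bwd_exit Q S \<and>
      j \<in> F \<and> (\<forall>i\<in>F. drop_val Q b j \<le> drop_val Q b i) \<and>
      restr_min Q (F - {j}) b' \<and> S' = (F - {j}, b', butlast ds))"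

definition gdt_iter :: "(real^'n \<Rightarrow> real) \<Rightarrow> (real^'n \<Rightarrow> real^'n) \<Rightarrow> real
    \<Rightarrow> 'n foba_state \<Rightarrow> 'n foba_state \<Rightarrow> bool" where
  "gdt_iter Q g \<epsilon> S S' \<longleftrightarrow> (\<exists>S1. gdt_fwd Q g \<epsilon> S S1 \<and> (bwd_step Q)\<^sup>*\<^sup>* S1 S' \<and> bwd_exit Q S')"

definition foba_gdt_output :: "(real^'n \<Rightarrow> real) \<Rightarrow> (real^'n \<Rightarrow> real^'n) \<Rightarrow> real
    \<Rightarrow> 'n set \<Rightarrow> real^'n \<Rightarrow> bool" where
  "foba_gdt_output Q g \<epsilon> F b \<longleftrightarrow>
     (\<exists>ds. (gdt_iter Q g \<epsilon>)\<^sup>*\<^sup>* ({}, 0, []) (F, b, ds) \<and> gdt_stop g \<epsilon> b)"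

end

theory Submission
  imports Defs
begin

text \<open>
  Write \<open>lo = \<rho>\<^sub>-(s)\<close>, \<open>hi = \<rho>\<^sub>+(s)\<close>, \<open>h1 = \<rho>\<^sub>+(1)\<close>, \<open>\<kappa> = \<surd>(hi/lo)\<close>, and \<open>bb\<close> for the
  sparse target.  The proof has four layers, one section each.
  (1) Elementary facts on sparse vectors and on one-dimensional quadratics.
  (2) One step of FoBa, for any \<open>Q\<close> with restricted strong convexity (locale \<open>rsc_pair\<close>):
      the gradient vanishes on the support of a restricted minimiser; a greedy forward step
      gains between \<open>M\<^sup>2/(2 h1)\<close> and \<open>M\<^sup>2/(2 lo)\<close>, \<open>M = \<parallel>\<nabla>Q\<parallel>\<^sub>\<infinity>\<close>; afterwards the gradient outside
      the support is at most \<open>(1+\<kappa>) M\<close>; when the backward loop exits, all entries of the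
      iterate satisfy \<open>\<beta>\<^sub>j\<^sup>2 \<ge> \<delta>/h1\<close>, \<open>\<delta>\<close> the last recorded gain.
  (3) Comparison with the target (locale \<open>foba_gdt\<close>): a restricted error bound controls
      \<open>\<parallel>b - bb\<parallel>\<^sup>2\<close> and \<open>Q b - Q bb\<close> by the missed coordinates \<open>supp bb - F\<close> only, hence bounds
      the false positives \<open>F - supp bb\<close>; with the condition on \<open>s\<close> this shows that the
      support never outgrows \<open>s - kbar\<close>.
  (4) An invariant of the algorithm, and at the output (gradient below \<open>\<epsilon>\<close>) a threshold
      estimate on the error bound of (3), which gives the four claims of the theorem.
\<close>

section \<open>Elementary facts about sparse vectors and quadratics\<close>

lemma supp_diff: "supp (x - y) \<subseteq> supp x \<union> supp y"
  by (auto simp: supp_def)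

lemma card_supp_le:
  assumes "supp (v :: real^'n) \<subseteq> S" and "card S \<le> m"
  shows "card (supp v) \<le> m"
  using assms by (meson card_mono finite le_trans)

lemma inner_restrict:
  assumes "\<And>j. j \<notin> A \<Longrightarrow> x $ j * y $ j = 0"
  shows "(x :: real^'n) \<bullet> y = (\<Sum>j\<in>A. x $ j * y $ j)"
proof -
  have "x \<bullet> y = (\<Sum>j\<in>UNIV. x $ j * y $ j)"
    by (simp add: inner_vec_def)
  also have "\<dots> = (\<Sum>j\<in>A. x $ j * y $ j)"
    using assms by (intro sum.mono_neutral_right) auto
  finally show ?thesis .
qed

lemma infnorm_le_cart:
  assumes "\<And>j. \<bar>(x :: real^'n) $ j\<bar> \<le> M"
  shows "infnorm x \<le> M"
  unfolding infnorm_cart by (rule cSup_least) (use assms in auto)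

lemma norm_split_supports:
  assumes "supp (b :: real^'n) \<subseteq> F"
  shows "(\<Sum>j\<in>supp c - F. (c $ j)\<^sup>2) + (\<Sum>j\<in>F - supp c. (b $ j)\<^sup>2) \<le> (norm (b - c))\<^sup>2"
proof -
  let ?x = "b - c"
  have b_zero: "b $ j = 0" if "j \<notin> F" for j
    using assms that by (auto simp: supp_def)
  have "(\<Sum>j\<in>supp c - F. (c $ j)\<^sup>2) = (\<Sum>j\<in>supp c - F. (?x $ j)\<^sup>2)"
    by (intro sum.cong) (auto simp: b_zero)
  moreover have "(\<Sum>j\<in>F - supp c. (b $ j)\<^sup>2) = (\<Sum>j\<in>F - supp c. (?x $ j)\<^sup>2)"
    by (intro sum.cong) (auto simp: supp_def)
  moreover have "(\<Sum>j\<in>supp c - F. (?x $ j)\<^sup>2) + (\<Sum>j\<in>F - supp c. (?x $ j)\<^sup>2)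
      = (\<Sum>j\<in>(supp c - F) \<union> (F - supp c). (?x $ j)\<^sup>2)"
    by (intro sum.union_disjoint[symmetric]) auto
  moreover have "\<dots> \<le> (\<Sum>j\<in>UNIV. (?x $ j)\<^sup>2)"
    by (intro sum_mono2) auto
  moreover have "(\<Sum>j\<in>UNIV. (?x $ j)\<^sup>2) = (norm ?x)\<^sup>2"
    by (simp only: power2_norm_eq_inner inner_vec_def) (simp add: power2_eq_square)
  ultimately show ?thesis by linarith
qed

lemma quadratic_max:
  fixes l G x :: real
  assumes "l > 0"
  shows "G * x - l * x\<^sup>2 \<le> G\<^sup>2 / (4 * l)"
proof -
  have "0 \<le> (G - 2 * l * x)\<^sup>2" by simp
  hence "4 * l * (G * x - l * x\<^sup>2) \<le> G\<^sup>2" by (simp add: power2_eq_square algebra_simps)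
  thus ?thesis using assms by (simp add: field_simps)
qed

lemma quadratic_beyond_threshold:
  fixes l e x :: real
  assumes l: "l > 0" and e: "e > 0" and x: "2 * sqrt 2 * e / l \<le> x"
  shows "e * x - l/2 * x\<^sup>2 \<le> - (e\<^sup>2 / (2 * l))"
proof -
  have "2 * sqrt 2 * e \<le> l * x" using x l by (simp add: field_simps)
  moreover have "sqrt 2 * e \<le> (2 * sqrt 2 - 1) * e" using e by (simp add: mult_right_mono)
  ultimately have "sqrt 2 * e \<le> l * x - e" by (simp add: algebra_simps)
  hence "(sqrt 2 * e)\<^sup>2 \<le> (l * x - e)\<^sup>2" using e by (intro power_mono) auto
  hence "2 * e\<^sup>2 \<le> (l * x - e)\<^sup>2" by (simp add: power_mult_distrib)
  hence "2 * l * (e * x - l/2 * x\<^sup>2) \<le> - e\<^sup>2"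
    by (simp add: power2_eq_square algebra_simps)
  thus ?thesis using l by (simp add: field_simps)
qed

text \<open>Summing the two previous estimates: each coordinate below the threshold contributes
  at most \<open>e\<^sup>2/(2l)\<close>, each coordinate above it at most \<open>-e\<^sup>2/(2l)\<close>.\<close>
lemma threshold_sum_bound:
  fixes x :: "'a \<Rightarrow> real" and l e :: real
  assumes l: "l > 0" and e: "e > 0" and A: "finite A"
  defines "\<gamma> \<equiv> 2 * sqrt 2 * e / l"
  shows "(\<Sum>j\<in>A. e * \<bar>x j\<bar> - l/2 * (x j)\<^sup>2)
    \<le> e\<^sup>2 / (2 * l) * (real (card {j\<in>A. \<bar>x j\<bar> < \<gamma>}) - real (card {j\<in>A. \<not> \<bar>x j\<bar> < \<gamma>}))"
proof -
  let ?c = "e\<^sup>2 / (2 * l)"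
  have "(\<Sum>j\<in>A. e * \<bar>x j\<bar> - l/2 * (x j)\<^sup>2) \<le> (\<Sum>j\<in>A. if \<bar>x j\<bar> < \<gamma> then ?c else - ?c)"
  proof (rule sum_mono)
    fix j
    show "e * \<bar>x j\<bar> - l/2 * (x j)\<^sup>2 \<le> (if \<bar>x j\<bar> < \<gamma> then ?c else - ?c)"
    proof (cases "\<bar>x j\<bar> < \<gamma>")
      case True
      have "e * \<bar>x j\<bar> - l/2 * \<bar>x j\<bar>\<^sup>2 \<le> e\<^sup>2 / (4 * (l/2))"
        by (rule quadratic_max) (use l in simp)
      thus ?thesis using True by simp
    next
      case False
      thus ?thesis using quadratic_beyond_threshold[OF l e, of "\<bar>x j\<bar>"] by (simp add: \<gamma>_def)
    qed
  qed
  also have "\<dots> = ?c * (real (card {j\<in>A. \<bar>x j\<bar> < \<gamma>}) - real (card {j\<in>A. \<not> \<bar>x j\<bar> < \<gamma>}))"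
    using A by (simp add: sum.If_cases Int_def Collect_conj_eq[symmetric] algebra_simps)
  finally show ?thesis .
qed

lemma support_size_arith:
  fixes nF nP kbar s :: nat and X :: real
  assumes "nF \<le> nP + kbar" and "real nP \<le> real kbar * X" and "1 \<le> X"
    and "real s - real kbar > (real kbar + 1) * (4 * X)"
  shows "nF + 1 + kbar \<le> s"
proof -
  have "real kbar \<le> real kbar * X" using mult_left_mono[OF assms(3), of "real kbar"] by simp
  hence "real nF + 1 + real kbar < real s" using assms by (simp add: algebra_simps)
  thus ?thesis by linarith
qed

section \<open>One step of FoBa under restricted strong convexity\<close>

locale rsc_pair =
  fixes Q :: "real^'n \<Rightarrow> real" and g :: "real^'n \<Rightarrow> real^'n"
    and s :: nat and lo hi h1 :: real
  assumes grad: "\<And>x. (Q has_derivative (\<lambda>h. g x \<bullet> h)) (at x)"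
    and rsc_s: "rsc Q g s lo hi"
    and h1_pos: "h1 > 0"
    and smooth_1: "\<And>b b'. card (supp (b' - b)) \<le> 1 \<Longrightarrow>
                     Q b' - Q b - g b \<bullet> (b' - b) \<le> h1/2 * (norm (b' - b))\<^sup>2"
    and s_pos: "s > 0"
begin

lemma lo_pos: "lo > 0" and hi_pos: "hi > 0"
  using rsc_s by (auto simp: rsc_def)

lemma rsc_lower:
  "card (supp (b' - b)) \<le> s \<Longrightarrow> lo/2 * (norm (b' - b))\<^sup>2 \<le> Q b' - Q b - g b \<bullet> (b' - b)"
  using rsc_s by (auto simp: rsc_def)

lemma rsc_upper:
  "card (supp (b' - b)) \<le> s \<Longrightarrow> Q b' - Q b - g b \<bullet> (b' - b) \<le> hi/2 * (norm (b' - b))\<^sup>2"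
  using rsc_s by (auto simp: rsc_def)

text \<open>Comparing the two conditions on a 1-sparse direction gives \<open>\<rho>\<^sub>-(s) \<le> \<rho>\<^sub>+(1)\<close>.\<close>
lemma lo_le_h1: "lo \<le> h1"
proof -
  define v :: "real^'n" where "v = axis undefined 1"
  have one: "card (supp (v - 0)) \<le> 1"
    by (rule card_supp_le[of _ "{undefined}"]) (auto simp: v_def supp_def axis_def)
  hence "card (supp (v - 0)) \<le> s" using s_pos by linarith
  from rsc_lower[OF this] smooth_1[OF one] have "lo/2 * (norm v)\<^sup>2 \<le> h1/2 * (norm v)\<^sup>2"
    by simp
  thus ?thesis by (simp add: v_def)
qed

lemma support_ratio_ge_1: "1 \<le> (1 + sqrt (hi / lo))\<^sup>2 * h1\<^sup>2 / lo\<^sup>2"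
proof -
  have "1 \<le> (1 + sqrt (hi / lo))\<^sup>2" using lo_pos hi_pos by (simp add: one_le_power)
  moreover have "1 \<le> h1\<^sup>2 / lo\<^sup>2" using lo_le_h1 lo_pos by (simp add: power_mono)
  ultimately show ?thesis using mult_mono[of 1 "(1 + sqrt (hi / lo))\<^sup>2" 1 "h1\<^sup>2 / lo\<^sup>2"] by simp
qed

lemma grad_zero:
  assumes rm: "restr_min Q F b" and j: "j \<in> F"
  shows "g b $ j = 0"
proof -
  let ?line = "\<lambda>t. b + t *\<^sub>R axis j 1"
  have "((\<lambda>t. Q (?line t)) has_derivative (\<lambda>t. g (?line 0) \<bullet> (t *\<^sub>R axis j 1))) (at 0)"
    by (rule has_derivative_compose[OF _ grad]) (auto intro!: derivative_eq_intros)
  moreover have "(\<lambda>t. g (?line 0) \<bullet> (t *\<^sub>R axis j 1)) = (*) (g b $ j)"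
    by (auto simp: inner_axis)
  ultimately have D: "DERIV (\<lambda>t. Q (?line t)) 0 :> g b $ j"
    by (simp add: has_field_derivative_def)
  have "\<forall>y. \<bar>0 - y\<bar> < 1 \<longrightarrow> Q (?line 0) \<le> Q (?line y)"
  proof (intro allI impI)
    fix y :: real
    have "supp (?line y) \<subseteq> F" using rm j by (auto simp: supp_def restr_min_def axis_def)
    thus "Q (?line 0) \<le> Q (?line y)" using rm by (auto simp: restr_min_def)
  qed
  from DERIV_local_min[OF D _ this] show ?thesis by simp
qed

lemma first_order_term:
  assumes rm: "restr_min Q F b"
  shows "g b \<bullet> (c - b) = (\<Sum>j\<in>supp c - F. g b $ j * c $ j)"
proof -
  have b_zero: "b $ j = 0" if "j \<notin> F" for j
    using rm that by (auto simp: restr_min_def supp_def)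
  have "g b \<bullet> (c - b) = (\<Sum>j\<in>supp c - F. g b $ j * (c - b) $ j)"
  proof (rule inner_restrict)
    fix j assume "j \<notin> supp c - F"
    thus "g b $ j * (c - b) $ j = 0"
      by (cases "j \<in> F") (auto simp: grad_zero[OF rm] b_zero supp_def)
  qed
  also have "\<dots> = (\<Sum>j\<in>supp c - F. g b $ j * c $ j)"
    by (intro sum.cong) (auto simp: b_zero)
  finally show ?thesis .
qed

lemma missed_term_bound:
  assumes rm: "restr_min Q F b" and G: "\<And>j. j \<in> supp c - F \<Longrightarrow> \<bar>g b $ j\<bar> \<le> G"
  shows "- (g b \<bullet> (c - b)) \<le> (\<Sum>j\<in>supp c - F. G * \<bar>c $ j\<bar>)"
proof -
  have "- (g b \<bullet> (c - b)) = (\<Sum>j\<in>supp c - F. - (g b $ j * c $ j))"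
    by (simp add: first_order_term[OF rm] sum_negf)
  also have "\<dots> \<le> (\<Sum>j\<in>supp c - F. G * \<bar>c $ j\<bar>)"
  proof (rule sum_mono)
    fix j assume "j \<in> supp c - F"
    hence "\<bar>g b $ j\<bar> * \<bar>c $ j\<bar> \<le> G * \<bar>c $ j\<bar>" using G by (intro mult_right_mono) auto
    thus "- (g b $ j * c $ j) \<le> G * \<bar>c $ j\<bar>"
      by (metis abs_ge_minus_self abs_mult order_trans)
  qed
  finally show ?thesis .
qed

lemma greedy_coord_is_max:
  assumes rm: "restr_min Q F b"
    and greedy: "\<And>j. j \<notin> F \<Longrightarrow> \<bar>g b $ j\<bar> \<le> \<bar>g b $ i\<bar>"
  shows "infnorm (g b) \<le> \<bar>g b $ i\<bar>"
proof (rule infnorm_le_cart)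
  fix j show "\<bar>g b $ j\<bar> \<le> \<bar>g b $ i\<bar>"
    by (cases "j \<in> F") (auto simp: grad_zero[OF rm] greedy)
qed

text \<open>Lower bound on the gain of a forward step: moving along coordinate \<open>i\<close> alone already
  decreases \<open>Q\<close> by \<open>(\<nabla>\<^sub>iQ)\<^sup>2/(2 h1)\<close>.\<close>
lemma forward_gain_lower:
  assumes sb: "supp b \<subseteq> F" and rm: "restr_min Q (insert i F) b'"
  shows "(g b $ i)\<^sup>2 / (2 * h1) \<le> Q b - Q b'"
proof -
  define \<alpha> where "\<alpha> = - (g b $ i) / h1"
  define y where "y = b + \<alpha> *\<^sub>R axis i 1"
  have "supp y \<subseteq> insert i F" using sb by (auto simp: supp_def y_def axis_def)
  hence opt: "Q b' \<le> Q y" using rm by (auto simp: restr_min_def)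
  have "card (supp (y - b)) \<le> 1"
    by (rule card_supp_le[of _ "{i}"]) (auto simp: y_def supp_def axis_def)
  from smooth_1[OF this] have "Q y \<le> Q b + \<alpha> * g b $ i + h1/2 * \<alpha>\<^sup>2"
    by (simp add: y_def inner_axis power2_abs)
  also have "\<dots> = Q b - (g b $ i)\<^sup>2 / (2 * h1)"
    using h1_pos by (simp add: \<alpha>_def field_simps power2_eq_square)
  finally show ?thesis using opt by linarith
qed

text \<open>Upper bound on the gain of a forward step: since only coordinate \<open>i\<close> of the gradient
  at the old minimiser is nonzero on the new support, restricted strong convexity caps
  the decrease at \<open>(\<nabla>\<^sub>iQ)\<^sup>2/(2 lo)\<close>.\<close>
lemma forward_gain_upper:
  assumes rm0: "restr_min Q F b0" and rm1: "restr_min Q (insert i F) b1"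
    and room: "card (insert i F) \<le> s"
  shows "Q b0 - Q b1 \<le> (g b0 $ i)\<^sup>2 / (2 * lo)"
proof -
  have sb0: "supp b0 \<subseteq> F" and sb1: "supp b1 \<subseteq> insert i F"
    using rm0 rm1 by (auto simp: restr_min_def)
  have "card (supp (b1 - b0)) \<le> s"
    by (rule card_supp_le[OF _ room]) (use supp_diff[of b1 b0] sb0 sb1 in auto)
  hence conv: "lo/2 * (norm (b1 - b0))\<^sup>2 \<le> Q b1 - Q b0 - g b0 \<bullet> (b1 - b0)"
    by (rule rsc_lower)
  define t where "t = (b1 - b0) $ i"
  have "g b0 \<bullet> (b1 - b0) = (\<Sum>j\<in>{i}. g b0 $ j * (b1 - b0) $ j)"
  proof (rule inner_restrict)
    fix j assume j: "j \<notin> {i}"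
    show "g b0 $ j * (b1 - b0) $ j = 0"
    proof (cases "j \<in> F")
      case True
      thus ?thesis by (simp add: grad_zero[OF rm0])
    next
      case False
      hence "b0 $ j = 0" "b1 $ j = 0" using j sb0 sb1 by (auto simp: supp_def)
      thus ?thesis by simp
    qed
  qed
  hence inner: "g b0 \<bullet> (b1 - b0) = g b0 $ i * t" by (simp add: t_def)
  have "t\<^sup>2 \<le> (norm (b1 - b0))\<^sup>2"
    unfolding t_def by (metis component_le_norm_cart abs_ge_zero power2_abs power_mono)
  hence "lo/2 * t\<^sup>2 \<le> lo/2 * (norm (b1 - b0))\<^sup>2"
    using lo_pos by (intro mult_left_mono) auto
  hence "Q b0 - Q b1 \<le> (- g b0 $ i) * t - (lo/2) * t\<^sup>2"
    using conv inner by linarith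
  also have "\<dots> \<le> (- g b0 $ i)\<^sup>2 / (4 * (lo/2))"
    by (rule quadratic_max) (use lo_pos in simp)
  finally show ?thesis by simp
qed

text \<open>Co-coercivity-type estimate: the gradient changes on a coordinate \<open>j\<close> outside the
  new support by at most \<open>\<surd>(2 hi \<delta>)\<close>, where \<open>\<delta>\<close> is the gain of the step.\<close>
lemma grad_change_bound:
  assumes rm0: "restr_min Q F0 b0" and rm1: "restr_min Q F1 b1" and sub: "F0 \<subseteq> F1"
    and j: "j \<notin> F1" and room: "card F1 + 1 \<le> s"
  shows "(g b0 $ j - g b1 $ j)\<^sup>2 / (2 * hi) \<le> Q b0 - Q b1"
proof -
  define D where "D = g b0 $ j - g b1 $ j"
  define t where "t = D / hi"
  define y where "y = b0 - t *\<^sub>R axis j 1"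
  have b0_zero: "b0 $ k = 0" if "k \<notin> F1" for k
    using rm0 sub that by (auto simp: restr_min_def supp_def)
  have b1_zero: "b1 $ k = 0" if "k \<notin> F1" for k
    using rm1 that by (auto simp: restr_min_def supp_def)
  have "supp (y - b1) \<subseteq> insert j F1"
    by (auto simp: supp_def y_def axis_def b0_zero b1_zero)
  moreover have "card (insert j F1) \<le> s" using room j by simp
  ultimately have "card (supp (y - b1)) \<le> s" by (rule card_supp_le)
  moreover have "0 \<le> lo/2 * (norm (y - b1))\<^sup>2" using lo_pos by simp
  ultimately have conv: "0 \<le> Q y - Q b1 - g b1 \<bullet> (y - b1)"
    using rsc_lower[of y b1] by linarith
  have "card (supp (y - b0)) \<le> s"
    by (rule card_supp_le[of _ "{j}"]) (use room in \<open>auto simp: y_def supp_def axis_def\<close>)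
  hence smooth: "Q y - Q b0 - g b0 \<bullet> (y - b0) \<le> hi/2 * t\<^sup>2"
    using rsc_upper[of y b0] by (simp add: y_def power2_abs)
  have "g b1 \<bullet> (b0 - b1) = (\<Sum>k\<in>{}. g b1 $ k * (b0 - b1) $ k)"
  proof (rule inner_restrict)
    fix k :: 'n
    show "g b1 $ k * (b0 - b1) $ k = 0"
      by (cases "k \<in> F1") (auto simp: grad_zero[OF rm1] b0_zero b1_zero)
  qed
  hence "g b1 \<bullet> (y - b1) = - t * g b1 $ j"
    by (simp add: y_def inner_diff_right inner_axis algebra_simps)
  moreover have "g b0 \<bullet> (y - b0) = - t * g b0 $ j"
    by (simp add: y_def inner_axis)
  ultimately have "t * D - hi/2 * t\<^sup>2 \<le> Q b0 - Q b1"
    using conv smooth by (simp add: D_def algebra_simps)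
  moreover have "t * D - hi/2 * t\<^sup>2 = D\<^sup>2 / (2 * hi)"
    using hi_pos by (simp add: t_def field_simps power2_eq_square)
  ultimately show ?thesis by (simp add: D_def)
qed

text \<open>Combining the two previous bounds: after a greedy forward step the gradient outside
  the new support is at most \<open>(1 + \<surd>(hi/lo)) M\<close>, where \<open>M\<close> bounds the old gradient.\<close>
lemma grad_after_forward:
  assumes rm0: "restr_min Q F b0" and rm1: "restr_min Q (insert i F) b1"
    and M: "\<And>k. \<bar>g b0 $ k\<bar> \<le> M"
    and room: "card (insert i F) + 1 \<le> s" and j: "j \<notin> insert i F"
  shows "\<bar>g b1 $ j\<bar> \<le> (1 + sqrt (hi / lo)) * M"
proof -
  define D where "D = g b0 $ j - g b1 $ j"
  have "D\<^sup>2 / (2 * hi) \<le> Q b0 - Q b1"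
    unfolding D_def by (rule grad_change_bound[OF rm0 rm1 _ j room]) auto
  also have "\<dots> \<le> (g b0 $ i)\<^sup>2 / (2 * lo)"
    by (rule forward_gain_upper[OF rm0 rm1]) (use room in simp)
  also have "\<dots> \<le> M\<^sup>2 / (2 * lo)"
    using power_mono[OF M[of i] abs_ge_zero, of 2] lo_pos
    by (intro divide_right_mono) (auto simp: power2_abs)
  finally have "D\<^sup>2 \<le> hi / lo * M\<^sup>2"
    using lo_pos hi_pos by (simp add: field_simps)
  hence "sqrt (D\<^sup>2) \<le> sqrt (hi / lo * M\<^sup>2)" by (rule real_sqrt_le_mono)
  moreover have "0 \<le> M" using M[of i] by linarith
  ultimately have "\<bar>D\<bar> \<le> sqrt (hi / lo) * M"
    by (simp only: real_sqrt_mult real_sqrt_abs abs_of_nonneg)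
  moreover have "\<bar>g b1 $ j\<bar> \<le> \<bar>g b0 $ j\<bar> + \<bar>D\<bar>" by (simp add: D_def)
  ultimately show ?thesis using M[of j] by (simp add: distrib_right)
qed

lemma drop_cost:
  assumes rm: "restr_min Q F b" and j: "j \<in> F"
  shows "drop_val Q b j - Q b \<le> h1/2 * (b $ j)\<^sup>2"
proof -
  define y where "y = b - b $ j *\<^sub>R axis j 1"
  have "card (supp (y - b)) \<le> 1"
    by (rule card_supp_le[of _ "{j}"]) (auto simp: y_def supp_def axis_def)
  from smooth_1[OF this] show ?thesis
    using grad_zero[OF rm j] by (simp add: drop_val_def y_def inner_axis power2_abs)
qed

text \<open>When the backward loop exits, no deletion is cheaper than half of the last recorded
  gain \<open>\<delta>\<close>; hence every coordinate of the iterate satisfies \<open>\<beta>\<^sub>j\<^sup>2 \<ge> \<delta>/h1\<close>.\<close>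
lemma exit_coord_large:
  assumes rm: "restr_min Q F b" and ex: "bwd_exit Q (F, b, ds)" and j: "j \<in> F"
  shows "last ds / h1 \<le> (b $ j)\<^sup>2"
proof -
  have "last ds / 2 \<le> Min (drop_val Q b ` F) - Q b" using ex j by (auto simp: bwd_exit_def)
  also have "Min (drop_val Q b ` F) \<le> drop_val Q b j" using j by simp
  hence "Min (drop_val Q b ` F) - Q b \<le> h1/2 * (b $ j)\<^sup>2" using drop_cost[OF rm j] by linarith
  finally show ?thesis using h1_pos by (simp add: field_simps)
qed

end

section \<open>Comparison with a sparse target\<close>

locale foba_gdt = rsc_pair +
  fixes \<epsilon> :: real and bb :: "real^'n" and kbar :: nat
  assumes kbar_card: "kbar = card (supp bb)"
    and bb_opt: "\<And>b. card (supp b) \<le> kbar \<Longrightarrow> Q bb \<le> Q b"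
    and s_cond: "real s - real kbar > (real kbar + 1) * ((sqrt (hi / lo) + 1) * (2 * h1 / lo))\<^sup>2"
    and eps_cond: "\<epsilon> > 2 * sqrt 2 * h1 / lo * infnorm (g bb)"
begin

lemma eps_pos: "\<epsilon> > 0"
proof -
  have "0 \<le> 2 * sqrt 2 * h1 / lo * infnorm (g bb)"
    using lo_pos h1_pos by (simp add: infnorm_pos_le)
  thus ?thesis using eps_cond by linarith
qed

lemma bb_restr_min: "restr_min Q (supp bb) bb"
  unfolding restr_min_def
proof (intro conjI allI impI)
  fix b assume "supp b \<subseteq> supp bb"
  hence "card (supp b) \<le> kbar" using kbar_card by (simp add: card_mono)
  thus "Q bb \<le> Q b" by (rule bb_opt)
qed simp

text \<open>A coordinate with \<open>x\<^sup>2 \<ge> \<epsilon>\<^sup>2/(2 h1\<^sup>2)\<close> dominates \<open>2 \<parallel>\<nabla>Q(bb)\<parallel>\<^sub>\<infinity> / lo\<close>; this is where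
  the condition on \<open>\<epsilon>\<close> is used.\<close>
lemma coord_dominates_target_grad:
  assumes "\<epsilon>\<^sup>2 / (2 * h1\<^sup>2) \<le> x\<^sup>2"
  shows "2 * infnorm (g bb) / lo \<le> \<bar>x\<bar>"
proof (rule power2_le_imp_le)
  have "0 \<le> 2 * sqrt 2 * h1 / lo * infnorm (g bb)"
    using lo_pos h1_pos by (simp add: infnorm_pos_le)
  hence "(2 * sqrt 2 * h1 / lo * infnorm (g bb))\<^sup>2 \<le> \<epsilon>\<^sup>2"
    using eps_cond by (intro power_mono) auto
  hence "8 * h1\<^sup>2 * (infnorm (g bb) / lo)\<^sup>2 \<le> \<epsilon>\<^sup>2"
    by (simp add: power_mult_distrib power_divide)
  hence "(2 * infnorm (g bb) / lo)\<^sup>2 \<le> \<epsilon>\<^sup>2 / (2 * h1\<^sup>2)"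
    using h1_pos by (simp add: field_simps power_mult_distrib power_divide)
  thus "(2 * infnorm (g bb) / lo)\<^sup>2 \<le> \<bar>x\<bar>\<^sup>2" using assms by simp
qed simp

text \<open>At the target, the first-order term towards \<open>b\<close> only involves the false positives
  \<open>F - supp bb\<close>; there it is dominated by \<open>lo/2 \<beta>\<^sub>j\<^sup>2\<close> when the entries of \<open>b\<close> are large.\<close>
lemma false_positive_term_bound:
  assumes sb: "supp b \<subseteq> F"
    and big: "\<And>j. j \<in> F - supp bb \<Longrightarrow> 2 * infnorm (g bb) / lo \<le> \<bar>b $ j\<bar>"
  shows "- (g bb \<bullet> (b - bb)) \<le> lo/2 * (\<Sum>j\<in>F - supp bb. (b $ j)\<^sup>2)"
proof -
  have "- (g bb \<bullet> (b - bb)) = (\<Sum>j\<in>supp b - supp bb. - (g bb $ j * b $ j))"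
    by (simp add: first_order_term[OF bb_restr_min] sum_negf)
  also have "\<dots> \<le> (\<Sum>j\<in>supp b - supp bb. lo/2 * (b $ j)\<^sup>2)"
  proof (rule sum_mono)
    fix j assume "j \<in> supp b - supp bb"
    hence j: "j \<in> F - supp bb" using sb by auto
    have "- (g bb $ j * b $ j) \<le> infnorm (g bb) * \<bar>b $ j\<bar>"
      using mult_right_mono[OF component_le_infnorm_cart[of "g bb" j] abs_ge_zero[of "b $ j"]]
      by (metis abs_ge_minus_self abs_mult order_trans)
    also have "\<dots> \<le> lo/2 * \<bar>b $ j\<bar> * \<bar>b $ j\<bar>"
      using big[OF j] lo_pos by (intro mult_right_mono) (auto simp: field_simps)
    finally show "- (g bb $ j * b $ j) \<le> lo/2 * (b $ j)\<^sup>2"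
      by (simp add: power2_eq_square)
  qed
  also have "\<dots> \<le> (\<Sum>j\<in>F - supp bb. lo/2 * (b $ j)\<^sup>2)"
    using sb lo_pos by (intro sum_mono2) auto
  finally show ?thesis by (simp add: sum_distrib_left)
qed

lemma restricted_error_bound:
  assumes rm: "restr_min Q F b" and room: "card F + kbar \<le> s"
    and big: "\<And>j. j \<in> F - supp bb \<Longrightarrow> 2 * infnorm (g bb) / lo \<le> \<bar>b $ j\<bar>"
    and G: "\<And>j. j \<in> supp bb - F \<Longrightarrow> \<bar>g b $ j\<bar> \<le> G"
  shows "lo/2 * (norm (b - bb))\<^sup>2 \<le> (\<Sum>j\<in>supp bb - F. G * \<bar>bb $ j\<bar> - lo/2 * (bb $ j)\<^sup>2)"
    and "Q b - Q bb \<le> (\<Sum>j\<in>supp bb - F. G * \<bar>bb $ j\<bar> - lo/2 * (bb $ j)\<^sup>2)"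
proof -
  let ?N = "supp bb - F" and ?P = "F - supp bb"
  have sb: "supp b \<subseteq> F" using rm by (simp add: restr_min_def)
  have union: "card (F \<union> supp bb) \<le> s"
    using card_Un_le[of F "supp bb"] room kbar_card by linarith
  have "card (supp (bb - b)) \<le> s"
    by (rule card_supp_le[OF _ union]) (use supp_diff[of bb b] sb in auto)
  hence conv1: "lo/2 * (norm (b - bb))\<^sup>2 \<le> Q bb - Q b - g b \<bullet> (bb - b)"
    using rsc_lower[of bb b] by (simp add: norm_minus_commute)
  have "card (supp (b - bb)) \<le> s"
    by (rule card_supp_le[OF _ union]) (use supp_diff[of b bb] sb in auto)
  hence conv2: "lo/2 * (norm (b - bb))\<^sup>2 \<le> Q b - Q bb - g bb \<bullet> (b - bb)"
    by (rule rsc_lower)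
  have missed: "- (g b \<bullet> (bb - b)) \<le> (\<Sum>j\<in>?N. G * \<bar>bb $ j\<bar>)"
    by (rule missed_term_bound[OF rm G])
  have false_pos: "- (g bb \<bullet> (b - bb)) \<le> lo/2 * (\<Sum>j\<in>?P. (b $ j)\<^sup>2)"
    by (rule false_positive_term_bound[OF sb big])
  have "(\<Sum>j\<in>?N. (bb $ j)\<^sup>2) + (\<Sum>j\<in>?P. (b $ j)\<^sup>2) \<le> (norm (b - bb))\<^sup>2"
    by (rule norm_split_supports[OF sb])
  hence split: "lo/2 * (\<Sum>j\<in>?N. (bb $ j)\<^sup>2) + lo/2 * (\<Sum>j\<in>?P. (b $ j)\<^sup>2)
      \<le> lo/2 * (norm (b - bb))\<^sup>2"
    using lo_pos by (simp add: distrib_left[symmetric])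
  have P_nonneg: "0 \<le> lo/2 * (\<Sum>j\<in>?P. (b $ j)\<^sup>2)"
    using lo_pos by (simp add: sum_nonneg)
  have sum_eq: "(\<Sum>j\<in>?N. G * \<bar>bb $ j\<bar> - lo/2 * (bb $ j)\<^sup>2)
      = (\<Sum>j\<in>?N. G * \<bar>bb $ j\<bar>) - lo/2 * (\<Sum>j\<in>?N. (bb $ j)\<^sup>2)"
    by (simp add: sum_subtractf sum_distrib_left)
  show "lo/2 * (norm (b - bb))\<^sup>2 \<le> (\<Sum>j\<in>?N. G * \<bar>bb $ j\<bar> - lo/2 * (bb $ j)\<^sup>2)"
    using conv1 conv2 missed false_pos split sum_eq by linarith
  show "Q b - Q bb \<le> (\<Sum>j\<in>?N. G * \<bar>bb $ j\<bar> - lo/2 * (bb $ j)\<^sup>2)"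
    using conv1 missed split P_nonneg sum_eq by linarith
qed

lemma false_positive_bound:
  assumes rm: "restr_min Q F b" and room: "card F + kbar \<le> s"
    and G: "\<And>j. j \<in> supp bb - F \<Longrightarrow> \<bar>g b $ j\<bar> \<le> G"
    and \<theta>_ge: "\<epsilon>\<^sup>2 / (2 * h1\<^sup>2) \<le> \<theta>"
    and \<theta>: "\<And>j. j \<in> F - supp bb \<Longrightarrow> \<theta> \<le> (b $ j)\<^sup>2"
  shows "lo/2 * \<theta> * card (F - supp bb) \<le> card (supp bb - F) * (G\<^sup>2 / (4 * lo))"
proof -
  let ?N = "supp bb - F" and ?P = "F - supp bb"
  have big: "2 * infnorm (g bb) / lo \<le> \<bar>b $ j\<bar>" if "j \<in> ?P" for j
    using coord_dominates_target_grad \<theta>_ge \<theta>[OF that] by (meson order_trans)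
  have sb: "supp b \<subseteq> F" using rm by (simp add: restr_min_def)
  have "card ?P * \<theta> \<le> (\<Sum>j\<in>?P. (b $ j)\<^sup>2)"
    using sum_mono[of ?P "\<lambda>_. \<theta>" "\<lambda>j. (b $ j)\<^sup>2"] \<theta> by simp
  also have "\<dots> \<le> (norm (b - bb))\<^sup>2 - (\<Sum>j\<in>?N. (bb $ j)\<^sup>2)"
    using norm_split_supports[OF sb, of bb] by linarith
  finally have "lo/2 * (card ?P * \<theta>) \<le> lo/2 * ((norm (b - bb))\<^sup>2 - (\<Sum>j\<in>?N. (bb $ j)\<^sup>2))"
    using lo_pos by (intro mult_left_mono) auto
  hence "lo/2 * \<theta> * card ?P \<le> lo/2 * (norm (b - bb))\<^sup>2 - lo/2 * (\<Sum>j\<in>?N. (bb $ j)\<^sup>2)"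
    by (simp add: right_diff_distrib mult_ac)
  also have "\<dots> \<le> (\<Sum>j\<in>?N. G * \<bar>bb $ j\<bar> - lo/2 * (bb $ j)\<^sup>2) - lo/2 * (\<Sum>j\<in>?N. (bb $ j)\<^sup>2)"
    using restricted_error_bound(1)[OF rm room big G] by simp
  also have "\<dots> = (\<Sum>j\<in>?N. (G * \<bar>bb $ j\<bar> - lo/2 * (bb $ j)\<^sup>2) - lo/2 * (bb $ j)\<^sup>2)"
    by (simp only: sum_subtractf sum_distrib_left)
  also have "\<dots> = (\<Sum>j\<in>?N. G * \<bar>bb $ j\<bar> - lo * \<bar>bb $ j\<bar>\<^sup>2)"
    by (intro sum.cong) (simp_all add: power2_abs)
  also have "\<dots> \<le> (\<Sum>j\<in>?N. G\<^sup>2 / (4 * lo))"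
    by (intro sum_mono quadratic_max lo_pos)
  finally show ?thesis by simp
qed

lemma false_positive_count:
  assumes rm: "restr_min Q F b" and room: "card F + kbar \<le> s" and eps_M: "\<epsilon> \<le> M"
    and G: "\<And>j. j \<in> supp bb - F \<Longrightarrow> \<bar>g b $ j\<bar> \<le> (1 + sqrt (hi / lo)) * M"
    and coords: "\<And>j. j \<in> F \<Longrightarrow> M\<^sup>2 / (2 * h1\<^sup>2) \<le> (b $ j)\<^sup>2"
  shows "card (F - supp bb) \<le> kbar * ((1 + sqrt (hi / lo))\<^sup>2 * h1\<^sup>2 / lo\<^sup>2)"
proof -
  define \<kappa> where "\<kappa> = sqrt (hi / lo)"
  define X where "X = (1 + \<kappa>)\<^sup>2 * h1\<^sup>2 / lo\<^sup>2"
  have M_pos: "M > 0" using eps_M eps_pos by linarith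
  have "\<epsilon>\<^sup>2 / (2 * h1\<^sup>2) \<le> M\<^sup>2 / (2 * h1\<^sup>2)"
    using eps_M eps_pos by (intro divide_right_mono power_mono) auto
  from false_positive_bound[OF rm room G this] coords
  have "lo/2 * (M\<^sup>2 / (2 * h1\<^sup>2)) * card (F - supp bb)
      \<le> card (supp bb - F) * (((1 + \<kappa>) * M)\<^sup>2 / (4 * lo))" by (simp add: \<kappa>_def)
  also have "\<dots> \<le> kbar * (((1 + \<kappa>) * M)\<^sup>2 / (4 * lo))"
    using kbar_card lo_pos by (intro mult_right_mono) (auto simp: card_mono)
  also have "\<dots> = (lo * M\<^sup>2 / (4 * h1\<^sup>2)) * (kbar * X)"
    using lo_pos h1_pos by (simp add: X_def field_simps power2_eq_square)
  finally have "(lo * M\<^sup>2 / (4 * h1\<^sup>2)) * card (F - supp bb) \<le> (lo * M\<^sup>2 / (4 * h1\<^sup>2)) * (kbar * X)"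
    by (simp add: field_simps)
  hence "card (F - supp bb) \<le> kbar * X"
    by (rule mult_left_le_imp_le) (use lo_pos h1_pos M_pos in simp)
  thus ?thesis by (simp add: X_def \<kappa>_def)
qed

text \<open>Then there is still room for one more index after the step: the new
  iterate has few false positives, and the condition on \<open>s\<close> absorbs them.\<close>
lemma support_growth:
  assumes rm0: "restr_min Q F b0" and i: "i \<notin> F"
    and greedy: "\<And>j. j \<notin> F \<Longrightarrow> \<bar>g b0 $ j\<bar> \<le> \<bar>g b0 $ i\<bar>"
    and not_stop: "\<epsilon> \<le> infnorm (g b0)"
    and room: "card F + 1 + kbar \<le> s"
    and rm1: "restr_min Q (insert i F) b1"
    and ex: "bwd_exit Q (insert i F, b1, ds @ [Q b0 - Q b1])"
  shows "card (insert i F) + 1 + kbar \<le> s"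
proof -
  define F1 where "F1 = insert i F"
  define M where "M = \<bar>g b0 $ i\<bar>"
  define X where "X = (1 + sqrt (hi / lo))\<^sup>2 * h1\<^sup>2 / lo\<^sup>2"
  have M_max: "\<bar>g b0 $ j\<bar> \<le> M" for j
    using greedy_coord_is_max[OF rm0 greedy] component_le_infnorm_cart[of "g b0" j]
    unfolding M_def by linarith
  have eps_M: "\<epsilon> \<le> M" using not_stop greedy_coord_is_max[OF rm0 greedy] by (simp add: M_def)
  have card_F1: "card F1 = card F + 1" using i by (simp add: F1_def)
  have gain: "M\<^sup>2 / (2 * h1) \<le> Q b0 - Q b1"
    using forward_gain_lower[OF _ rm1] rm0 by (simp add: M_def restr_min_def power2_abs)
  have coords: "M\<^sup>2 / (2 * h1\<^sup>2) \<le> (b1 $ j)\<^sup>2" if "j \<in> F1" for j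
  proof -
    have "M\<^sup>2 / (2 * h1\<^sup>2) = M\<^sup>2 / (2 * h1) / h1" by (simp add: power2_eq_square)
    also have "\<dots> \<le> (Q b0 - Q b1) / h1" by (rule divide_right_mono[OF gain]) (use h1_pos in simp)
    also have "\<dots> \<le> (b1 $ j)\<^sup>2" using exit_coord_large[OF rm1 ex] that by (simp add: F1_def)
    finally show ?thesis .
  qed
  have grad_out: "\<bar>g b1 $ j\<bar> \<le> (1 + sqrt (hi / lo)) * M" if j: "j \<in> supp bb - F1" for j
  proof -
    have "card (supp bb) > 0" using j by (auto simp: card_gt_0_iff)
    hence "card (insert i F) + 1 \<le> s" using room card_F1 kbar_card unfolding F1_def by linarith
    moreover have "j \<notin> insert i F" using j by (simp add: F1_def)
    ultimately show ?thesis by (rule grad_after_forward[OF rm0 rm1 M_max])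
  qed
  have "restr_min Q F1 b1" and "card F1 + kbar \<le> s"
    using rm1 room card_F1 by (auto simp: F1_def)
  from false_positive_count[OF this eps_M grad_out coords]
  have fp_count: "card (F1 - supp bb) \<le> kbar * X" by (simp add: X_def)
  have "card F1 \<le> card ((F1 - supp bb) \<union> supp bb)" by (intro card_mono) auto
  hence size: "card F1 \<le> card (F1 - supp bb) + kbar"
    using card_Un_le[of "F1 - supp bb" "supp bb"] kbar_card by linarith
  have "((sqrt (hi / lo) + 1) * (2 * h1 / lo))\<^sup>2 = 4 * X"
    by (simp add: X_def power_mult_distrib power_divide add.commute)
  hence "real s - real kbar > (real kbar + 1) * (4 * X)" using s_cond by simp
  from support_size_arith[OF size fp_count support_ratio_ge_1[folded X_def] this]
  show ?thesis by (simp add: F1_def)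
qed

section \<open>The invariant of FoBa-gdt\<close>

text \<open>Bookkeeping of an algorithm state \<open>(F, b, ds)\<close>: \<open>b\<close> is a restricted minimiser on \<open>F\<close>,
  one gain is recorded per support index, and every recorded gain is at least
  \<open>\<epsilon>\<^sup>2/(2 h1)\<close> (forward steps are only taken while \<open>\<parallel>\<nabla>Q\<parallel>\<^sub>\<infinity> \<ge> \<epsilon>\<close>).\<close>
definition valid_state :: "'n foba_state \<Rightarrow> bool" where
  "valid_state S \<longleftrightarrow> (case S of (F, b, ds) \<Rightarrow> restr_min Q F b \<and> length ds = card F \<and>
      (\<forall>x\<in>set ds. \<epsilon>\<^sup>2 / (2 * h1) \<le> x))"

definition foba_inv :: "'n foba_state \<Rightarrow> bool" where
  "foba_inv S \<longleftrightarrow> valid_state S \<and> bwd_exit Q S \<and> (case S of (F, b, ds) \<Rightarrow>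
      card F + kbar \<le> s \<and> (\<not> gdt_stop g \<epsilon> b \<longrightarrow> card F + 1 + kbar \<le> s))"

lemma forward_gain_eps:
  assumes rm0: "restr_min Q F b0"
    and greedy: "\<And>j. j \<notin> F \<Longrightarrow> \<bar>g b0 $ j\<bar> \<le> \<bar>g b0 $ i\<bar>"
    and not_stop: "\<epsilon> \<le> infnorm (g b0)" and rm1: "restr_min Q (insert i F) b1"
  shows "\<epsilon>\<^sup>2 / (2 * h1) \<le> Q b0 - Q b1"
proof -
  have "\<epsilon> \<le> \<bar>g b0 $ i\<bar>" using not_stop greedy_coord_is_max[OF rm0 greedy] by linarith
  hence "\<epsilon>\<^sup>2 \<le> (g b0 $ i)\<^sup>2"
    using eps_pos power_mono[of \<epsilon> "\<bar>g b0 $ i\<bar>" 2] by (simp add: power2_abs)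
  hence "\<epsilon>\<^sup>2 / (2 * h1) \<le> (g b0 $ i)\<^sup>2 / (2 * h1)"
    using h1_pos by (intro divide_right_mono) auto
  also have "\<dots> \<le> Q b0 - Q b1"
    using forward_gain_lower[OF _ rm1] rm0 by (simp add: restr_min_def)
  finally show ?thesis .
qed

lemma backward_steps:
  assumes "(bwd_step Q)\<^sup>*\<^sup>* S1 S" and "valid_state S1"
  shows "valid_state S \<and> (S = S1 \<or> card (fst S) < card (fst S1))"
  using assms(1)
proof (induction rule: rtranclp_induct)
  case base
  then show ?case using assms(2) by simp
next
  case (step S S')
  from step.hyps(2) obtain F b ds j b' where S: "S = (F, b, ds)" and j: "j \<in> F"
    and rm: "restr_min Q (F - {j}) b'" and S': "S' = (F - {j}, b', butlast ds)"
    unfolding bwd_step_def by blast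
  have card: "card (F - {j}) + 1 = card F"
    using j card_Diff_singleton[of j F] card_gt_0_iff[of F] by fastforce
  have "valid_state S'"
    using step.IH rm card unfolding S S' valid_state_def by (auto dest: in_set_butlastD)
  moreover have "card (fst S') < card (fst S1)"
    using step.IH card unfolding S S' by auto
  ultimately show ?case by simp
qed

text \<open>If no deletion happens, the support grows and \<open>support_growth\<close> provides room; otherwise
  the support does not grow.\<close>
lemma iteration_preserves_inv:
  assumes inv: "foba_inv S0" and it: "gdt_iter Q g \<epsilon> S0 S"
  shows "foba_inv S"
proof -
  from it obtain S1 where fwd: "gdt_fwd Q g \<epsilon> S0 S1" and bwd: "(bwd_step Q)\<^sup>*\<^sup>* S1 S"
    and ex: "bwd_exit Q S" unfolding gdt_iter_def by blast
  from fwd obtain F0 b0 ds0 i b1 where S0: "S0 = (F0, b0, ds0)" and nst: "\<not> gdt_stop g \<epsilon> b0"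
    and i: "i \<notin> F0" and greedy: "\<And>j. j \<notin> F0 \<Longrightarrow> \<bar>g b0 $ j\<bar> \<le> \<bar>g b0 $ i\<bar>"
    and rm1: "restr_min Q (insert i F0) b1"
    and S1: "S1 = (insert i F0, b1, ds0 @ [Q b0 - Q b1])"
    unfolding gdt_fwd_def by blast
  have rm0: "restr_min Q F0 b0" and len0: "length ds0 = card F0"
    and gains0: "\<forall>x\<in>set ds0. \<epsilon>\<^sup>2 / (2 * h1) \<le> x" and room0: "card F0 + 1 + kbar \<le> s"
    using inv nst unfolding foba_inv_def valid_state_def S0 by auto
  have not_stop: "\<epsilon> \<le> infnorm (g b0)" using nst by (simp add: gdt_stop_def)
  have gain: "\<epsilon>\<^sup>2 / (2 * h1) \<le> Q b0 - Q b1"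
    by (rule forward_gain_eps[OF rm0 greedy not_stop rm1])
  have card1: "card (insert i F0) = card F0 + 1" using i by simp
  have "valid_state S1"
    unfolding S1 valid_state_def using rm1 len0 gains0 gain card1 by auto
  with backward_steps[OF bwd] have valid: "valid_state S"
    and shrink: "S = S1 \<or> card (fst S) < card (insert i F0)" by (auto simp: S1)
  obtain F b ds where S: "S = (F, b, ds)" by (cases S)
  have "card F + 1 + kbar \<le> s"
  proof (cases "S = S1")
    case True
    have "bwd_exit Q (insert i F0, b1, ds0 @ [Q b0 - Q b1])" using ex unfolding True S1 .
    from support_growth[OF rm0 i greedy not_stop room0 rm1 this]
    have "card (insert i F0) + 1 + kbar \<le> s" .
    thus ?thesis using True S S1 by simp
  next
    case False
    thus ?thesis using shrink room0 card1 S by auto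
  qed
  thus ?thesis using valid ex unfolding foba_inv_def S by auto
qed

lemma initial_inv: "foba_inv ({}, 0, [])"
proof -
  have "restr_min Q {} 0"
    unfolding restr_min_def
  proof (intro conjI allI impI)
    fix b :: "real^'n" assume "supp b \<subseteq> {}"
    hence "b = 0" by (auto simp: supp_def vec_eq_iff)
    thus "Q 0 \<le> Q b" by simp
  qed (simp add: supp_def)
  moreover have "1 + kbar \<le> s"
  proof -
    have "0 \<le> (real kbar + 1) * ((sqrt (hi / lo) + 1) * (2 * h1 / lo))\<^sup>2" by simp
    thus ?thesis using s_cond by linarith
  qed
  ultimately show ?thesis by (simp add: foba_inv_def valid_state_def bwd_exit_def)
qed

lemma reachable_inv:
  assumes "(gdt_iter Q g \<epsilon>)\<^sup>*\<^sup>* ({}, 0, []) S"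
  shows "foba_inv S"
  using assms by (induction rule: rtranclp_induct) (auto intro: initial_inv iteration_preserves_inv)

section \<open>Guarantees at the output\<close>

text \<open>Under the invariant every entry of the iterate on its support satisfies
  \<open>\<beta>\<^sub>j\<^sup>2 \<ge> \<epsilon>\<^sup>2/(2 h1\<^sup>2)\<close>: the exit condition compares with the last gain, which is large.\<close>
lemma inv_coords_large:
  assumes inv: "foba_inv (F, b, ds)" and j: "j \<in> F"
  shows "\<epsilon>\<^sup>2 / (2 * h1\<^sup>2) \<le> (b $ j)\<^sup>2"
proof -
  have rm: "restr_min Q F b" and len: "length ds = card F"
    and gains: "\<forall>x\<in>set ds. \<epsilon>\<^sup>2 / (2 * h1) \<le> x" and ex: "bwd_exit Q (F, b, ds)"
    using inv unfolding foba_inv_def valid_state_def by auto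
  have "ds \<noteq> []" using len j by auto
  hence "\<epsilon>\<^sup>2 / (2 * h1) \<le> last ds" using gains by simp
  hence "\<epsilon>\<^sup>2 / (2 * h1) / h1 \<le> last ds / h1" by (rule divide_right_mono) (use h1_pos in simp)
  also have "\<dots> \<le> (b $ j)\<^sup>2" by (rule exit_coord_large[OF rm ex j])
  finally show ?thesis by (simp add: power2_eq_square)
qed

text \<open>At an output state, false positives are rare: the entries of the iterate are at least
  \<open>\<epsilon>/(\<surd>2 h1)\<close> while the gradient is below \<open>\<epsilon>\<close>, so \<open>false_positive_bound\<close> gives
  \<open>lo\<^sup>2 |F - supp bb| \<le> h1\<^sup>2 |supp bb - F|\<close>.\<close>
lemma output_false_positives:
  assumes inv: "foba_inv (F, b, ds)" and stop: "gdt_stop g \<epsilon> b"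
  shows "lo\<^sup>2 / (8 * h1\<^sup>2) * card (F - supp bb) \<le> card (supp bb - F)"
proof -
  let ?N = "supp bb - F" and ?P = "F - supp bb"
  have rm: "restr_min Q F b" and room: "card F + kbar \<le> s"
    using inv unfolding foba_inv_def valid_state_def by auto
  have "lo/2 * (\<epsilon>\<^sup>2 / (2 * h1\<^sup>2)) * card ?P \<le> card ?N * (\<epsilon>\<^sup>2 / (4 * lo))"
  proof (rule false_positive_bound[OF rm room])
    show "\<bar>g b $ j\<bar> \<le> \<epsilon>" for j
      using stop component_le_infnorm_cart[of "g b" j] by (simp add: gdt_stop_def)
  qed (use inv_coords_large[OF inv] in auto)
  hence "(\<epsilon>\<^sup>2 / (4 * lo)) * (lo\<^sup>2 / h1\<^sup>2 * card ?P) \<le> (\<epsilon>\<^sup>2 / (4 * lo)) * card ?N"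
    using lo_pos h1_pos by (simp add: field_simps power2_eq_square)
  hence "lo\<^sup>2 / h1\<^sup>2 * card ?P \<le> card ?N"
    by (rule mult_left_le_imp_le) (use lo_pos eps_pos in simp)
  moreover have "lo\<^sup>2 / (8 * h1\<^sup>2) * card ?P \<le> lo\<^sup>2 / h1\<^sup>2 * card ?P"
    using h1_pos by (intro mult_right_mono) (auto simp: field_simps)
  ultimately show ?thesis by linarith
qed

text \<open>At a state satisfying the invariant where the stopping test succeeds, the restricted
  error bound with \<open>G = \<epsilon>\<close> and the threshold estimate give the four bounds.\<close>
lemma output_guarantees:
  assumes inv: "foba_inv (F, b, ds)" and stop: "gdt_stop g \<epsilon> b"
  defines "\<Delta> \<equiv> card {j \<in> supp bb - F. \<bar>bb $ j\<bar> < 2 * sqrt 2 * \<epsilon> / lo}"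
  shows "(norm (b - bb))\<^sup>2 \<le> 8 * \<epsilon>\<^sup>2 / lo\<^sup>2 * real \<Delta>"
    and "Q b - Q bb \<le> \<epsilon>\<^sup>2 / lo * real \<Delta>"
    and "lo\<^sup>2 / (8 * h1\<^sup>2) * real (card (F - supp bb)) \<le> real (card (supp bb - F))"
    and "card (supp bb - F) \<le> 2 * \<Delta>"
proof -
  let ?N = "supp bb - F" and ?P = "F - supp bb" and ?\<gamma> = "2 * sqrt 2 * \<epsilon> / lo"
  define \<Lambda> where "\<Lambda> = card {j \<in> ?N. \<not> \<bar>bb $ j\<bar> < ?\<gamma>}"
  define c where "c = \<epsilon>\<^sup>2 / (2 * lo)"
  have c_pos: "c > 0" using eps_pos lo_pos by (simp add: c_def)
  have rm: "restr_min Q F b" and room: "card F + kbar \<le> s"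
    using inv unfolding foba_inv_def valid_state_def by auto
  have grad_small: "\<bar>g b $ j\<bar> \<le> \<epsilon>" for j
    using stop component_le_infnorm_cart[of "g b" j] by (simp add: gdt_stop_def)
  have coords: "\<epsilon>\<^sup>2 / (2 * h1\<^sup>2) \<le> (b $ j)\<^sup>2" if "j \<in> F" for j
    by (rule inv_coords_large[OF inv that])
  have big: "2 * infnorm (g bb) / lo \<le> \<bar>b $ j\<bar>" if "j \<in> ?P" for j
    using coord_dominates_target_grad coords that by simp
  have grad_missed: "\<And>j. j \<in> ?N \<Longrightarrow> \<bar>g b $ j\<bar> \<le> \<epsilon>" using grad_small by blast
  have "(\<Sum>j\<in>?N. \<epsilon> * \<bar>bb $ j\<bar> - lo/2 * (bb $ j)\<^sup>2) \<le> c * (real \<Delta> - real \<Lambda>)"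
    using threshold_sum_bound[OF lo_pos eps_pos, of ?N "\<lambda>j. bb $ j"]
    unfolding \<Delta>_def \<Lambda>_def c_def by simp
  with restricted_error_bound[OF rm room big grad_missed]
  have dist: "lo/2 * (norm (b - bb))\<^sup>2 \<le> c * (real \<Delta> - real \<Lambda>)"
    and excess: "Q b - Q bb \<le> c * (real \<Delta> - real \<Lambda>)" by linarith+
  have "0 \<le> lo/2 * (norm (b - bb))\<^sup>2" using lo_pos by simp
  hence "0 \<le> c * (real \<Delta> - real \<Lambda>)" using dist by linarith
  hence few_large: "\<Lambda> \<le> \<Delta>" using c_pos by (simp add: zero_le_mult_iff)
  have "card ({j \<in> ?N. \<bar>bb $ j\<bar> < ?\<gamma>} \<union> {j \<in> ?N. \<not> \<bar>bb $ j\<bar> < ?\<gamma>}) = \<Delta> + \<Lambda>"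
    unfolding \<Delta>_def \<Lambda>_def by (rule card_Un_disjoint) auto
  moreover have "{j \<in> ?N. \<bar>bb $ j\<bar> < ?\<gamma>} \<union> {j \<in> ?N. \<not> \<bar>bb $ j\<bar> < ?\<gamma>} = ?N" by blast
  ultimately have missed: "card ?N = \<Delta> + \<Lambda>" by simp
  have below: "c * (real \<Delta> - real \<Lambda>) \<le> c * real \<Delta>" using c_pos by simp
  have "lo/2 * (norm (b - bb))\<^sup>2 \<le> lo/2 * (\<epsilon>\<^sup>2 / lo\<^sup>2 * real \<Delta>)"
    using dist below lo_pos by (simp add: c_def power2_eq_square)
  hence "(norm (b - bb))\<^sup>2 \<le> \<epsilon>\<^sup>2 / lo\<^sup>2 * real \<Delta>"
    by (rule mult_left_le_imp_le) (use lo_pos in simp)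
  moreover have "\<epsilon>\<^sup>2 / lo\<^sup>2 * real \<Delta> \<le> 8 * \<epsilon>\<^sup>2 / lo\<^sup>2 * real \<Delta>"
    by (intro mult_right_mono divide_right_mono) auto
  ultimately show "(norm (b - bb))\<^sup>2 \<le> 8 * \<epsilon>\<^sup>2 / lo\<^sup>2 * real \<Delta>" by linarith
  have "c * real \<Delta> \<le> \<epsilon>\<^sup>2 / lo * real \<Delta>"
    using lo_pos by (intro mult_right_mono) (auto simp: c_def field_simps)
  thus "Q b - Q bb \<le> \<epsilon>\<^sup>2 / lo * real \<Delta>" using excess below by linarith
  show "card ?N \<le> 2 * \<Delta>" using missed few_large by simp
  show "lo\<^sup>2 / (8 * h1\<^sup>2) * card ?P \<le> card ?N"
    by (rule output_false_positives[OF inv stop])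
qed

end

theorem theorem5:
  fixes Q :: "real^'n \<Rightarrow> real" and g :: "real^'n \<Rightarrow> real^'n"
    and \<rho>m \<rho>p :: "nat \<Rightarrow> real" and s :: nat and \<epsilon> :: real
    and \<beta>bar :: "real^'n" and kbar :: nat
    and F :: "'n set" and \<beta> :: "real^'n"
  assumes convex: "convex_on UNIV Q"
    and grad: "\<And>x. (Q has_derivative (\<lambda>h. g x \<bullet> h)) (at x)"
    and grad_cont: "continuous_on UNIV g"
    and minex: "\<And>F'. \<exists>b. restr_min Q F' b"
    and rsc_s: "rsc Q g s (\<rho>m s) (\<rho>p s)"
    and rsc_1: "rsc Q g 1 (\<rho>m 1) (\<rho>p 1)"
    and kbar_def: "kbar = card (supp \<beta>bar)"
    and \<beta>bar_opt: "\<And>b. card (supp b) \<le> kbar \<Longrightarrow> Q \<beta>bar \<le> Q b"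
    and s_pos: "s > 0"
    and s_cond: "real s - real kbar >
       (real kbar + 1) * ((sqrt (\<rho>p s / \<rho>m s) + 1) * (2 * \<rho>p 1 / \<rho>m s))\<^sup>2"
    and eps_cond: "\<epsilon> > 2 * sqrt 2 * \<rho>p 1 / \<rho>m s * infnorm (g \<beta>bar)"
    and run: "foba_gdt_output Q g \<epsilon> F \<beta>"
  shows "let \<gamma> = 2 * sqrt 2 * \<epsilon> / \<rho>m s;
             Fbar = supp \<beta>bar;
             \<Delta> = card {j \<in> Fbar - F. \<bar>\<beta>bar $ j\<bar> < \<gamma>}
         in (norm (\<beta> - \<beta>bar))\<^sup>2 \<le> 8 * \<epsilon>\<^sup>2 / (\<rho>m s)\<^sup>2 * real \<Delta>
          \<and> Q \<beta> - Q \<beta>bar \<le> \<epsilon>\<^sup>2 / \<rho>m s * real \<Delta>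
          \<and> (\<rho>m s)\<^sup>2 / (8 * (\<rho>p 1)\<^sup>2) * real (card (F - Fbar)) \<le> real (card (Fbar - F))
          \<and> card (Fbar - F) \<le> 2 * \<Delta>"
proof -
  interpret foba_gdt Q g s "\<rho>m s" "\<rho>p s" "\<rho>p 1" \<epsilon> \<beta>bar kbar
    by unfold_locales
      (use grad rsc_s rsc_1 s_pos kbar_def \<beta>bar_opt s_cond eps_cond in \<open>auto simp: rsc_def\<close>)
  from run obtain ds where reach: "(gdt_iter Q g \<epsilon>)\<^sup>*\<^sup>* ({}, 0, []) (F, \<beta>, ds)"
    and stop: "gdt_stop g \<epsilon> \<beta>" unfolding foba_gdt_output_def by blast
  have inv: "foba_inv (F, \<beta>, ds)" by (rule reachable_inv[OF reach])
  show ?thesis unfolding Let_def using output_guarantees[OF inv stop] by simp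
qed

end
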